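(* Let $f\colon\mathbb{R}^n\to\mathbb{R}$ be continuous and suppose there is $\gamma>0$ such that (i) the set $S_\gamma=\{z\in\mathbb{R}^n : f(z)\le\inf f+\gamma\}$ is compact, and (ii) every $x\in S_\gamma$ with $0\in\partial f(x)$ is a global minimizer of $f$. Let the MAD parameters $x^1\in\mathbb{R}^n$, $\alpha$, $t_1,\tau,T\in(0,\infty)$, $\eta_-\in(0,1)$, $\eta_+>1$, $\theta\in(0,1)$, $\delta>0$, $g^0\in\mathbb{R}^n$ satisfy $\alpha\in(1-\sqrt{\eta_-},1+\sqrt{\eta_-})$, and suppose there is a global minimizer $x^\star$ of $f$ with $t_1\ge\tau$ and $T\ge t_1\ge\|x^\star-x^1\|^2/(2\gamma)$. Let $\{x^k\},\{t_k\},\{\hat x^k\}$ be generated by MAD (described in the context). Then $\{u(x^k,t_k)\}$ is monotonically decreasing and convergent, and there is $\mu>0$ such that $$u(x^{k+1},t_{k+1})\le u(x^k,t_k)-\frac{\mu}{2}\|x^k-\hat x^k\|^2\quad\text{for all }k\in\mathbb{N}.$$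
   Context: For $t>0$, $\operatorname{prox}_{tf}(x)=\operatorname{argmin}_{z}\big(f(z)+\frac{1}{2t}\|z-x\|^2\big)$ and $u(x,t)=\inf_{z}\big(f(z)+\frac{1}{2t}\|z-x\|^2\big)$. The subdifferential $\partial f(\bar x)$ is the set of all $v$ with $f(x)\ge f(\bar x)+\langle v,x-\bar x\rangle+o(\|x-\bar x\|)$ as $x\to\bar x$. MAD: for $k=1,2,\dots$: choose $\hat x^k\in\operatorname{prox}_{t_kf}(x^k)$; set $g^k=(x^k-\hat x^k)/t_k$; set $x^{k+1}=x^k-\alpha t_kg^k$; set $t_{k+1}=\min(\eta_+t_k,T)$ if $\|g^k\|\le\theta\|g^{k-1}\|+\delta$, and $t_{k+1}=\max(\eta_-t_k,\tau)$ otherwise. *)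

theory Defs
  imports "HOL-Analysis.Analysis"
begin

definition frechet_subdiff :: "('a::real_inner \<Rightarrow> real) \<Rightarrow> 'a \<Rightarrow> 'a set" where
  "frechet_subdiff f xb = {v. \<forall>e>0. \<exists>d>0. \<forall>x. norm (x - xb) < d \<longrightarrow>
      f x \<ge> f xb + inner v (x - xb) - e * norm (x - xb)}"

definition prox :: "real \<Rightarrow> ('a::real_normed_vector \<Rightarrow> real) \<Rightarrow> 'a \<Rightarrow> 'a set" where
  "prox t f x = {z. \<forall>w. f z + (norm (z - x))^2 / (2 * t) \<le> f w + (norm (w - x))^2 / (2 * t)}"

definition moreau :: "('a::real_normed_vector \<Rightarrow> real) \<Rightarrow> 'a \<Rightarrow> real \<Rightarrow> real" where
  "moreau f x t = (INF z. f z + (norm (z - x))^2 / (2 * t))"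

end

theory Submission
  imports Defs
begin

text \<open>Since x(k+1) = x(k) - \<alpha> (x(k) - xh(k)), the prox point xh(k) lies at distance
  |1 - \<alpha>| norm (x(k) - xh(k)) from x(k+1) and is thus a competitor in the envelope
  u(x(k+1), t(k+1)). The step-size rule keeps t(k) in [\<tau>, T] and shrinks it at most by the
  factor \<eta>m, so with c = (1 - \<alpha>)^2 / \<eta>m < 1
    u(x(k+1), t(k+1)) \<le> f(xh(k)) + c D / (2 t(k)) = u(x(k), t(k)) - (1 - c) D / (2 t(k)),
  where D = norm (x(k) - xh(k))^2, and t(k) \<le> T gives \<mu> = (1 - c) / T. The envelope values
  are at least min f, so the decreasing sequence converges.\<close>

lemma moreau_eq_prox:
  assumes "z \<in> prox t f x"
  shows "moreau f x t = f z + (norm (z - x))\<^sup>2 / (2 * t)"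
  unfolding moreau_def using assms by (intro cInf_eq_minimum) (auto simp: prox_def)

lemma prox_value_le_moreau:
  assumes "0 < t" "z \<in> prox t f x"
  shows "f z \<le> moreau f x t"
  using moreau_eq_prox[OF assms(2)] assms(1) by simp

lemma moreau_le:
  fixes f :: "'a::real_normed_vector \<Rightarrow> real"
  assumes "bdd_below (range f)" "0 < t"
  shows "moreau f x t \<le> f w + (norm (w - x))\<^sup>2 / (2 * t)"
proof -
  obtain m where "\<And>z. m \<le> f z" using assms(1) by (auto simp: bdd_below_def)
  then have "bdd_below (range (\<lambda>z. f z + (norm (z - x))\<^sup>2 / (2 * t)))"
    using \<open>0 < t\<close> by (intro bdd_belowI2[where m = m]) (smt (verit) divide_nonneg_pos zero_le_power2)
  then show ?thesis unfolding moreau_def by (rule cINF_lower) simp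
qed

lemma relaxed_prox_step_moreau_descent:
  fixes f :: "'a::real_normed_vector \<Rightarrow> real"
  assumes "bdd_below (range f)" "0 < t" "0 < \<eta>" "\<eta> * t \<le> t'" and z: "z \<in> prox t f x"
  shows "moreau f (x - \<alpha> *\<^sub>R (x - z)) t'
    \<le> moreau f x t - (1 - (1 - \<alpha>)\<^sup>2 / \<eta>) / (2 * t) * (norm (x - z))\<^sup>2"
proof -
  define D where "D = (norm (x - z))\<^sup>2"
  have "z - (x - \<alpha> *\<^sub>R (x - z)) = (1 - \<alpha>) *\<^sub>R (z - x)"
    by (simp add: algebra_simps)
  then have dist: "(norm (z - (x - \<alpha> *\<^sub>R (x - z))))\<^sup>2 = (1 - \<alpha>)\<^sup>2 * D"
    by (simp add: D_def power_mult_distrib norm_minus_commute)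
  have "0 < t'" using assms(2-4) by (smt (verit) mult_pos_pos)
  have "moreau f (x - \<alpha> *\<^sub>R (x - z)) t' \<le> f z + (1 - \<alpha>)\<^sup>2 * D / (2 * t')"
    using moreau_le[OF assms(1) \<open>0 < t'\<close>, where x = "x - \<alpha> *\<^sub>R (x - z)" and w = z] dist by simp
  also have "\<dots> \<le> f z + (1 - \<alpha>)\<^sup>2 * D / (2 * (\<eta> * t))"
    using assms(2-4) \<open>0 < t'\<close> by (intro add_left_mono divide_left_mono) (auto simp: D_def)
  also have "\<dots> = moreau f x t - (1 - (1 - \<alpha>)\<^sup>2 / \<eta>) / (2 * t) * D"
    using moreau_eq_prox[OF z] assms(2,3)
    by (simp add: D_def norm_minus_commute field_simps)
  finally show ?thesis by (simp add: D_def)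
qed

lemma stepsize_update_bounds:
  fixes \<tau> T s \<eta>m \<eta>p :: real
  assumes "0 \<le> \<tau>" "\<tau> \<le> s" "s \<le> T" "0 \<le> \<eta>m" "\<eta>m \<le> 1" "1 \<le> \<eta>p"
    and s': "s' = (if P then min (\<eta>p * s) T else max (\<eta>m * s) \<tau>)"
  shows "\<tau> \<le> s'" "s' \<le> T" "\<eta>m * s \<le> s'"
proof -
  have "\<eta>m * s \<le> s" "s \<le> \<eta>p * s"
    using assms(1-6) by (simp_all add: mult_left_le_one_le mult_le_cancel_right1)
  then show "\<tau> \<le> s'" "s' \<le> T" "\<eta>m * s \<le> s'"
    using assms(2,3) s' by auto
qed

lemma stepsizes_bounded:
  fixes t :: "nat \<Rightarrow> real"
  assumes "0 \<le> \<tau>" "\<tau> \<le> t 1" "t 1 \<le> T" "0 \<le> \<eta>m" "\<eta>m \<le> 1" "1 \<le> \<eta>p"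
    and update: "\<And>k. k \<ge> 1 \<Longrightarrow> t (Suc k) = (if P k then min (\<eta>p * t k) T else max (\<eta>m * t k) \<tau>)"
    and "k \<ge> 1"
  shows "\<tau> \<le> t k \<and> t k \<le> T"
  using \<open>k \<ge> 1\<close>
proof (induction k rule: dec_induct)
  case base
  then show ?case using assms(2,3) by simp
next
  case (step k)
  then show ?case
    using stepsize_update_bounds(1,2)[OF assms(1) _ _ assms(4-6) update[OF \<open>1 \<le> k\<close>]] by blast
qed

lemma convergent_if_eventually_decreasing_bounded_below:
  fixes u :: "nat \<Rightarrow> real"
  assumes "\<And>k. k \<ge> m \<Longrightarrow> u (Suc k) \<le> u k" "\<And>k. k \<ge> m \<Longrightarrow> B \<le> u k"
  shows "convergent u"
proof -
  have "decseq (\<lambda>k. u (k + m))" using assms(1) by (intro decseq_SucI) simp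
  moreover have "\<forall>k. B \<le> u (k + m)" using assms(2) by simp
  ultimately obtain L where "(\<lambda>k. u (k + m)) \<longlonglongrightarrow> L" by (rule decseq_convergent)
  then show ?thesis using convergent_ignore_initial_segment convergentI by blast
qed

theorem lemma8:
  fixes f :: "'a::euclidean_space \<Rightarrow> real"
    and \<gamma> \<alpha> \<tau> T \<eta>m \<eta>p \<theta> \<delta> :: real
    and x xh g :: "nat \<Rightarrow> 'a"
    and t :: "nat \<Rightarrow> real"
    and xstar :: 'a
  assumes cont: "continuous_on UNIV f"
    and gamma_pos: "\<gamma> > 0"
    and compact_level: "compact {z. f z \<le> Inf (range f) + \<gamma>}"
    and stationary_min: "\<And>y. f y \<le> Inf (range f) + \<gamma> \<Longrightarrow> 0 \<in> frechet_subdiff f y \<Longrightarrow> (\<forall>z. f y \<le> f z)"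
    and alpha_pos: "\<alpha> > 0"
    and t1_pos: "t 1 > 0" and tau_pos: "\<tau> > 0" and T_pos: "T > 0"
    and eta_m: "0 < \<eta>m" "\<eta>m < 1"
    and eta_p: "\<eta>p > 1"
    and theta: "0 < \<theta>" "\<theta> < 1"
    and delta_pos: "\<delta> > 0"
    and alpha_range: "1 - sqrt \<eta>m < \<alpha>" "\<alpha> < 1 + sqrt \<eta>m"
    and xstar_min: "\<forall>z. f xstar \<le> f z"
    and t1_ge_tau: "t 1 \<ge> \<tau>"
    and T_ge_t1: "T \<ge> t 1"
    and t1_ge: "t 1 \<ge> (norm (xstar - x 1))^2 / (2 * \<gamma>)"
    and prox_step: "\<And>k. k \<ge> 1 \<Longrightarrow> xh k \<in> prox (t k) f (x k)"
    and g_def: "\<And>k. k \<ge> 1 \<Longrightarrow> g k = (1 / t k) *\<^sub>R (x k - xh k)"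
    and x_step: "\<And>k. k \<ge> 1 \<Longrightarrow> x (Suc k) = x k - (\<alpha> * t k) *\<^sub>R g k"
    and t_step: "\<And>k. k \<ge> 1 \<Longrightarrow> t (Suc k) =
        (if norm (g k) \<le> \<theta> * norm (g (k - 1)) + \<delta> then min (\<eta>p * t k) T
         else max (\<eta>m * t k) \<tau>)"
  shows "(\<forall>k\<ge>1. moreau f (x (Suc k)) (t (Suc k)) \<le> moreau f (x k) (t k))
    \<and> convergent (\<lambda>k. moreau f (x k) (t k))
    \<and> (\<exists>\<mu>>0. \<forall>k\<ge>1. moreau f (x (Suc k)) (t (Suc k))
                 \<le> moreau f (x k) (t k) - \<mu> / 2 * (norm (x k - xh k))^2)"
proof -
  have bdd: "bdd_below (range f)" using xstar_min by (auto intro: bdd_belowI2)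
  have t_bounds: "\<tau> \<le> t k \<and> t k \<le> T" if "k \<ge> 1" for k
    using stepsizes_bounded[where P = "\<lambda>k. norm (g k) \<le> \<theta> * norm (g (k - 1)) + \<delta>",
        OF _ t1_ge_tau T_ge_t1 _ _ _ t_step that] tau_pos eta_m eta_p by simp
  then have t_pos: "0 < t k" if "k \<ge> 1" for k using that tau_pos by force
  have t_shrink: "\<eta>m * t k \<le> t (Suc k)" if "k \<ge> 1" for k
    using stepsize_update_bounds(3)[OF _ _ _ _ _ _ t_step[OF that]] t_bounds[OF that] tau_pos eta_m eta_p
    by simp
  define c where "c = (1 - \<alpha>)\<^sup>2 / \<eta>m"
  have "sqrt ((1 - \<alpha>)\<^sup>2) < sqrt \<eta>m" using alpha_range by auto
  then have "c < 1" using eta_m unfolding real_sqrt_less_iff by (simp add: c_def)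
  define \<mu> where "\<mu> = (1 - c) / T"
  have "\<mu> > 0" using \<open>c < 1\<close> T_pos by (simp add: \<mu>_def)
  have descent: "moreau f (x (Suc k)) (t (Suc k)) \<le> moreau f (x k) (t k) - \<mu> / 2 * (norm (x k - xh k))\<^sup>2"
    if "k \<ge> 1" for k
  proof -
    have "x (Suc k) = x k - \<alpha> *\<^sub>R (x k - xh k)" using x_step[OF that] g_def[OF that] t_pos[OF that] by simp
    moreover have "\<mu> / 2 \<le> (1 - c) / (2 * t k)"
      using t_bounds[OF that] t_pos[OF that] \<open>c < 1\<close> by (simp add: \<mu>_def frac_le)
    ultimately show ?thesis
      using relaxed_prox_step_moreau_descent[OF bdd t_pos[OF that] eta_m(1) t_shrink[OF that] prox_step[OF that]]
      unfolding c_def by (smt (verit) mult_right_mono zero_le_power2)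
  qed
  have decreasing: "moreau f (x (Suc k)) (t (Suc k)) \<le> moreau f (x k) (t k)" if "k \<ge> 1" for k
  proof -
    have "0 \<le> \<mu> / 2 * (norm (x k - xh k))\<^sup>2" using \<open>\<mu> > 0\<close> by simp
    then show ?thesis using descent[OF that] by linarith
  qed
  have bounded_below: "f xstar \<le> moreau f (x k) (t k)" if "k \<ge> 1" for k
    using prox_value_le_moreau[OF t_pos[OF that] prox_step[OF that]] xstar_min order_trans by blast
  have "convergent (\<lambda>k. moreau f (x k) (t k))"
    using decreasing bounded_below by (rule convergent_if_eventually_decreasing_bounded_below)
  with decreasing descent \<open>\<mu> > 0\<close> show ?thesis by blast
qed

end
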